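(* Let $(G_n)_{n \geq 1}$ be a sequence of finite solvable groups whose derived lengths are bounded by a fixed constant $\ell$, and for each $n$ let $G_n$ act transitively on a finite set $\Omega_n$, with $|\Omega_n| \to \infty$. Then the sequence of actions $(G_n \circlearrowright \Omega_n)_{n \geq 1}$ is not expanding: for every constant $d$ and every sequence $(S_n)_{n\ge1}$ of symmetric subsets $S_n \subseteq G_n$ with $|S_n| \leq d$, the graphs $(\mathrm{Sch}(G_n \circlearrowright \Omega_n, S_n))_{n \geq 1}$ are not expander graphs.
   Context: For a group $G$ acting on a finite set $\Omega$ (right action written $\omega \mapsto \omega^g$) and a symmetric subset $S \subseteq G$, the Schreier graph $\mathrm{Sch}(G \circlearrowright \Omega, S)$ is the (multi)graph with vertex set $\Omega$ and an edge $(\omega, \omega^s)$ for each $\omega \in \Omega$ and $s \in S$. For a finite graph $\Gamma$ and $X \subseteq V(\Gamma)$, the vertex boundary $\partial_{ver}X$ is the set of vertices at distance exactly $1$ from $X$. The vertex isoperimetric number is $h_{ver}(\Gamma) = \min_{X \neq \emptyset, |X| \leq |V(\Gamma)|/2} |\partial_{ver}X|/|X|$. A sequence of regular graphs of bounded degree with number of vertices tending to infinity is a sequence of expander graphs if there is a fixed $\varepsilon > 0$ with $h_{ver}(\Gamma_n) \geq \varepsilon$ for all $n$. A sequence of transitive actions $(G_n \circlearrowright \Omega_n)_{n\ge1}$ is expanding if there is a sequence of symmetric subsets $S_n \subseteq G_n$ of bounded cardinality such that $(\mathrm{Sch}(G_n \circlearrowright \Omega_n, S_n))_{n \geq 1}$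 are expander graphs. *)

theory Defs
  imports "HOL-Algebra.Solvable_Groups" "HOL-Algebra.Group_Action" "HOL-Library.Extended_Real"
begin

definition schreier_adj :: "'c set \<Rightarrow> ('a \<Rightarrow> 'c \<Rightarrow> 'c) \<Rightarrow> 'a set \<Rightarrow> 'c \<Rightarrow> 'c \<Rightarrow> bool" where
  "schreier_adj \<Omega> \<phi> S x y \<longleftrightarrow> x \<in> \<Omega> \<and> y \<in> \<Omega> \<and> (\<exists>s\<in>S. y = \<phi> s x \<or> x = \<phi> s y)"

definition vertex_boundary :: "'c set \<Rightarrow> ('a \<Rightarrow> 'c \<Rightarrow> 'c) \<Rightarrow> 'a set \<Rightarrow> 'c set \<Rightarrow> 'c set" where
  "vertex_boundary \<Omega> \<phi> S X = {y \<in> \<Omega>. y \<notin> X \<and> (\<exists>x\<in>X. schreier_adj \<Omega> \<phi> S x y)}"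

text \<open>Vertex isoperimetric number of the Schreier graph (minimum over an empty
  family is +infinity, the usual convention for a one-vertex graph).\<close>
definition h_ver :: "'c set \<Rightarrow> ('a \<Rightarrow> 'c \<Rightarrow> 'c) \<Rightarrow> 'a set \<Rightarrow> ereal" where
  "h_ver \<Omega> \<phi> S =
     (INF X \<in> {X. X \<subseteq> \<Omega> \<and> X \<noteq> {} \<and> real (card X) \<le> real (card \<Omega>) / 2}.
        ereal (real (card (vertex_boundary \<Omega> \<phi> S X)) / real (card X)))"

definition schreier_expanders ::
    "(nat \<Rightarrow> 'c set) \<Rightarrow> (nat \<Rightarrow> 'a \<Rightarrow> 'c \<Rightarrow> 'c) \<Rightarrow> (nat \<Rightarrow> 'a set) \<Rightarrow> bool" where
  "schreier_expanders \<Omega> \<phi> S \<longleftrightarrow>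
     (\<exists>d. \<forall>n. card (S n) \<le> d) \<and>
     filterlim (\<lambda>n. card (\<Omega> n)) at_top sequentially \<and>
     (\<exists>\<epsilon>::real. \<epsilon> > 0 \<and> (\<forall>n. h_ver (\<Omega> n) (\<phi> n) (S n) \<ge> ereal \<epsilon>))"

end

theory Submission
  imports Defs "HOL-Library.Multiset"
begin

(* For groups of derived length at most l, Folner multisets exist with a size bound N
   depending only on l, the number k of elements to be almost fixed and the tolerance delta.
   By induction on l: list the elements as a_1, ..., a_k, take the box of power products
   a_1^e_1 ... a_k^e_k with 0 <= e_i < L, and thicken it by a Folner multiset of the derived
   subgroup for the finitely many corrections that appear when a_j is moved across the
   product. Pushing such a multiset along an orbit map into Omega, its level sets are almost
   invariant on average, so one of them, of size at most N <= |Omega|/2, has vertex boundary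
   at most |S| delta times its size. Hence h_ver tends to 0 as |Omega_n| grows. *)

section \<open>Multisets and their level sets\<close>

lemma size_diff_triangle: "size (A - C) \<le> size (A - B) + size (B - (C::'x multiset))"
proof -
  have "A - C \<subseteq># (A - B) + (B - C)"
    unfolding subseteq_mset_def count_diff count_union by (intro allI) arith
  then show ?thesis by (metis size_mset_mono size_union)
qed

lemma size_image_mset_diff_le: "size (image_mset f A - image_mset f B) \<le> size (A - B)"
proof -
  have "A \<subseteq># (A - B) + B"
    unfolding subseteq_mset_def count_diff count_union by (intro allI) arith
  then have "image_mset f A - image_mset f B \<subseteq># image_mset f (A - B)"
    by (metis image_mset_subseteq_mono image_mset_union subset_eq_diff_conv)
  then show ?thesis by (metis size_image_mset size_mset_mono)
qed

lemma size_add_diff_add_le: "size ((A + B) - (C + D)) \<le> size (A - C) + size (B - (D::'x multiset))"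
proof -
  have "(A + B) - (C + D) \<subseteq># (A - C) + (B - D)"
    unfolding subseteq_mset_def count_diff count_union by (intro allI) arith
  then show ?thesis by (metis size_mset_mono size_union)
qed

lemma size_sum_diff_sum_le:
  "finite E \<Longrightarrow> size ((\<Sum>e\<in>E. F e) - (\<Sum>e\<in>E. H e)) \<le> (\<Sum>e\<in>E. size (F e - (H e :: 'x multiset)))"
proof (induction E rule: finite_induct)
  case (insert x E)
  then show ?case using size_add_diff_add_le[of "F x" "sum F E" "H x" "sum H E"] by simp
qed simp

lemma size_sum_diff_sum_le_diff:
  assumes "finite E" "finite E'"
  shows "size ((\<Sum>e\<in>E. f e) - (\<Sum>e\<in>E'. f e)) \<le> (\<Sum>e\<in>E - E'. size (f e :: 'x multiset))"
proof -
  have "(\<Sum>e\<in>E. f e) = (\<Sum>e\<in>E \<inter> E'. f e) + (\<Sum>e\<in>E - E'. f e)"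
    using sum.subset_diff[of "E \<inter> E'" E f] assms by (simp add: Diff_Int add.commute)
  moreover have "(\<Sum>e\<in>E'. f e) = (\<Sum>e\<in>E \<inter> E'. f e) + (\<Sum>e\<in>E' - E. f e)"
    using sum.subset_diff[of "E \<inter> E'" E' f] assms
    by (simp add: Diff_Int add.commute Int_commute Diff_Int2)
  ultimately have "size ((\<Sum>e\<in>E. f e) - (\<Sum>e\<in>E'. f e)) \<le> size (\<Sum>e\<in>E - E'. f e)"
    by (metis add_diff_cancel_left diff_subset_eq_self size_mset_mono)
  then show ?thesis by simp
qed

lemma image_mset_sum: "image_mset f (\<Sum>e\<in>E. F e) = (\<Sum>e\<in>E. image_mset f (F e))"
  by (induction E rule: infinite_finite_induct) auto

lemma card_set_mset_le: "card (set_mset M) \<le> size M"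
proof -
  have "card (set_mset M) = (\<Sum>x\<in>set_mset M. 1)" by simp
  also have "\<dots> \<le> (\<Sum>x\<in>set_mset M. count M x)" by (rule sum_mono) (simp add: Suc_le_eq)
  also have "\<dots> = size M" by (rule size_multiset_overloaded_eq[symmetric])
  finally show ?thesis .
qed

definition mset_level :: "'x multiset \<Rightarrow> nat \<Rightarrow> 'x set" where
  "mset_level M t = {x. t < count M x}"

lemma mset_level_subset: "mset_level M t \<subseteq> set_mset M"
  by (auto simp: mset_level_def simp flip: count_greater_zero_iff)

lemma mset_level_empty [simp]: "mset_level {#} t = {}"
  by (simp add: mset_level_def)

text \<open>Layer-cake decomposition: a multiplicity is the number of levels lying below it.\<close>
lemma size_diff_eq_sum_mset_level:
  assumes "size Q \<le> T"
  shows "size (Q - P) = (\<Sum>t<T. card (mset_level Q t - mset_level P t))"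
proof -
  have levels: "card (mset_level Q t - mset_level P t)
      = (\<Sum>x\<in>set_mset Q. if count P x \<le> t \<and> t < count Q x then 1 else 0)" for t
  proof -
    have "mset_level Q t - mset_level P t = {x\<in>set_mset Q. count P x \<le> t \<and> t < count Q x}"
      using mset_level_subset[of Q t] by (auto simp: mset_level_def)
    then show ?thesis by (simp add: sum.If_cases Int_def)
  qed
  have heights: "(\<Sum>t<T. if count P x \<le> t \<and> t < count Q x then 1 else 0) = count Q x - count P x"
    if "x \<in># Q" for x
  proof -
    have "count Q x \<le> T" using assms by (meson count_le_size le_trans)
    then have "{t\<in>{..<T}. count P x \<le> t \<and> t < count Q x} = {count P x..<count Q x}" by auto
    then show ?thesis by (simp add: sum.If_cases Int_def)
  qed
  have "(\<Sum>t<T. card (mset_level Q t - mset_level P t))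
      = (\<Sum>x\<in>set_mset Q. \<Sum>t<T. if count P x \<le> t \<and> t < count Q x then 1 else 0)"
    unfolding levels by (rule sum.swap)
  also have "\<dots> = (\<Sum>x\<in>set_mset Q. count (Q - P) x)"
    using heights by simp
  also have "\<dots> = (\<Sum>x\<in>set_mset (Q - P). count (Q - P) x)"
    by (rule sum.mono_neutral_right) (auto simp: in_diff_count simp flip: count_greater_zero_iff)
  also have "\<dots> = size (Q - P)"
    by (rule size_multiset_overloaded_eq[symmetric])
  finally show ?thesis by simp
qed

corollary sum_card_mset_level: "size M \<le> T \<Longrightarrow> (\<Sum>t<T. card (mset_level M t)) = size M"
  using size_diff_eq_sum_mset_level[of M T "{#}"] by simp

lemma mset_level_image_mset:
  assumes inj: "inj_on f (set_mset P)"
  shows "mset_level (image_mset f P) t = f ` mset_level P t"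
proof -
  have count_f: "count (image_mset f P) (f x) = count P x" if "x \<in># P" for x
  proof -
    have "f -` {f x} \<inter> set_mset P = {x}" using inj that by (auto dest: inj_onD)
    then show ?thesis by (simp add: count_image_mset)
  qed
  have "y \<in> f ` mset_level P t" if y: "y \<in> mset_level (image_mset f P) t" for y
  proof -
    obtain x where "x \<in># P" "y = f x"
      using y mset_level_subset[of "image_mset f P" t] by auto
    then show ?thesis using y count_f by (auto simp: mset_level_def)
  qed
  moreover have "f x \<in> mset_level (image_mset f P) t" if "x \<in> mset_level P t" for x
    using that mset_level_subset[of P t] count_f by (auto simp: mset_level_def)
  ultimately show ?thesis by blast
qed

section \<open>Boxes of exponent vectors\<close>

definition bump :: "nat \<Rightarrow> nat list \<Rightarrow> nat list" where
  "bump j ns = ns[j := Suc (ns ! j)]"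

lemma bump_Cons_0 [simp]: "bump 0 (n # ns) = Suc n # ns"
  by (simp add: bump_def)

lemma bump_Cons_Suc [simp]: "bump (Suc j) (n # ns) = n # bump j ns"
  by (simp add: bump_def)

definition box :: "nat \<Rightarrow> nat \<Rightarrow> nat list set" where
  "box L k = {ns. set ns \<subseteq> {..<L} \<and> length ns = k}"

lemma finite_box: "finite (box L k)"
  unfolding box_def by (rule finite_lists_length_eq) simp

lemma card_box: "card (box L k) = L ^ k"
  using card_lists_length_eq[of "{..<L}" k] by (simp add: box_def)

lemma box_nth_less: "ns \<in> box L k \<Longrightarrow> j < k \<Longrightarrow> ns ! j < L"
  unfolding box_def using nth_mem by blast

lemma inj_bump: "inj (bump j)"
proof (rule injI)
  fix ns ms assume eq: "bump j ns = bump j ms"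
  then have len: "length ns = length ms"
    unfolding bump_def by (metis length_list_update)
  show "ns = ms"
  proof (rule nth_equalityI[OF len])
    fix i assume "i < length ns"
    then show "ns ! i = ms ! i"
      using arg_cong[OF eq, of "\<lambda>xs. xs ! i"] len by (cases "i = j") (auto simp: bump_def)
  qed
qed

lemma card_box_slice_eq:
  assumes "j < k" "v < L" "w < L"
  shows "card {ns \<in> box L k. ns ! j = v} = card {ns \<in> box L k. ns ! j = w}"
proof -
  have "{ns \<in> box L k. ns ! j = w} = (\<lambda>ns. ns[j := w]) ` {ns \<in> box L k. ns ! j = v}"
  proof (intro equalityI subsetI)
    fix ns assume ns: "ns \<in> {ns \<in> box L k. ns ! j = w}"
    then have "ns = (ns[j := v])[j := w]" "ns[j := v] \<in> {ns \<in> box L k. ns ! j = v}"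
      using assms set_update_subset_insert[of ns j v] by (auto simp: box_def)
    then show "ns \<in> (\<lambda>ns. ns[j := w]) ` {ns \<in> box L k. ns ! j = v}" by blast
  qed (use assms set_update_subset_insert in \<open>fastforce simp: box_def\<close>)
  moreover have "inj_on (\<lambda>ns. ns[j := w]) {ns \<in> box L k. ns ! j = v}"
    by (rule inj_onI) (metis (mono_tags, lifting) list_update_overwrite list_update_id mem_Collect_eq)
  ultimately show ?thesis by (simp add: card_image)
qed

text \<open>The box is the disjoint union of L equally large slices, and bumping coordinate j
  leaves the box only from its top slice.\<close>
lemma card_bump_box_diff:
  assumes j: "j < k"
  shows "L * card (bump j ` box L k - box L k) \<le> card (box L k)"
proof (cases "L = 0")
  case False
  let ?top = "{ns \<in> box L k. ns ! j = L - 1}"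
  have "box L k = (\<Union>v<L. {ns \<in> box L k. ns ! j = v})"
    using j box_nth_less by blast
  moreover have "card (\<Union>v<L. {ns \<in> box L k. ns ! j = v}) = (\<Sum>v<L. card {ns \<in> box L k. ns ! j = v})"
    by (rule card_UN_disjoint) (auto intro: finite_subset[OF _ finite_box])
  ultimately have "card (box L k) = (\<Sum>v<L. card {ns \<in> box L k. ns ! j = v})"
    by simp
  also have "\<dots> = (\<Sum>v<L. card ?top)"
    by (rule sum.cong[OF refl], rule card_box_slice_eq[OF j]) (use False in auto)
  finally have box: "card (box L k) = L * card ?top" by simp
  have "bump j ` box L k - box L k \<subseteq> bump j ` ?top"
  proof
    fix ms assume "ms \<in> bump j ` box L k - box L k"
    then obtain ns where ns: "ns \<in> box L k" "ms = bump j ns" "ms \<notin> box L k" by blast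
    have "ns ! j < L" using box_nth_less[OF ns(1) j] .
    moreover have "\<not> Suc (ns ! j) < L"
      using ns j set_update_subset_insert[of ns j "Suc (ns ! j)"] by (auto simp: box_def bump_def)
    ultimately show "ms \<in> bump j ` ?top" using ns by auto
  qed
  then have "card (bump j ` box L k - box L k) \<le> card (bump j ` ?top)"
    by (intro card_mono finite_imageI) (simp add: finite_box)
  also have "\<dots> \<le> card ?top"
    by (rule card_image_le) (simp add: finite_box)
  finally have "card (bump j ` box L k - box L k) \<le> card ?top" .
  then show ?thesis using box by simp
qed simp

section \<open>Power products modulo the derived subgroup\<close>

definition (in group) derived_cong :: "'a set \<Rightarrow> 'a \<Rightarrow> 'a \<Rightarrow> bool" where
  "derived_cong K x y \<longleftrightarrow> x \<in> K \<and> y \<in> K \<and> inv x \<otimes> y \<in> derived G K"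

context group
begin

lemma mult_inv_cancel_left: "y \<in> carrier G \<Longrightarrow> z \<in> carrier G \<Longrightarrow> y \<otimes> (inv y \<otimes> z) = z"
  by (simp add: m_assoc[symmetric])

lemma subgroup_nat_pow_closed: "subgroup K G \<Longrightarrow> x \<in> K \<Longrightarrow> x [^] (n::nat) \<in> K"
  by (induction n) (auto simp: subgroup.one_closed subgroup.m_closed)

lemma derived_conj_closed:
  assumes K: "subgroup K G" and k: "k \<in> K" and c: "c \<in> derived G K"
  shows "inv k \<otimes> c \<otimes> k \<in> derived G K"
proof -
  have "inv\<^bsub>G\<lparr>carrier := K\<rparr>\<^esub> k \<otimes>\<^bsub>G\<lparr>carrier := K\<rparr>\<^esub> c \<otimes>\<^bsub>G\<lparr>carrier := K\<rparr>\<^esub> k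
      \<in> derived G K"
    by (rule normal.inv_op_closed1[OF derived_subgroup_is_normal[OF K]]) (use k c in auto)
  then show ?thesis
    using m_inv_consistent[OF K k] by simp
qed

lemma derived_commutator_mem:
  assumes K: "subgroup K G" and x: "x \<in> K" and y: "y \<in> K"
  shows "inv (x \<otimes> y) \<otimes> (y \<otimes> x) \<in> derived G K"
proof -
  have "x \<in> carrier G" "y \<in> carrier G" using x y subgroup.subset[OF K] by auto
  then have "inv (x \<otimes> y) \<otimes> (y \<otimes> x) = inv y \<otimes> inv x \<otimes> inv (inv y) \<otimes> inv (inv x)"
    by (simp add: inv_mult_group m_assoc)
  moreover have "inv y \<otimes> inv x \<otimes> inv (inv y) \<otimes> inv (inv x) \<in> derived_set G K"
    using x y subgroup.m_inv_closed[OF K] by blast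
  ultimately show ?thesis
    unfolding derived_def by (simp add: generate.incl)
qed

lemma derived_cong_refl: "subgroup K G \<Longrightarrow> x \<in> K \<Longrightarrow> derived_cong K x x"
  using subgroup.one_closed[OF derived_is_subgroup[OF subgroup.subset]] subgroup.subset
  unfolding derived_cong_def by fastforce

lemma derived_cong_sym:
  assumes K: "subgroup K G" and xy: "derived_cong K x y"
  shows "derived_cong K y x"
proof -
  interpret D: subgroup "derived G K" G
    by (rule derived_is_subgroup[OF subgroup.subset[OF K]])
  have "x \<in> carrier G" "y \<in> carrier G"
    using xy subgroup.subset[OF K] unfolding derived_cong_def by auto
  then have "inv (inv x \<otimes> y) = inv y \<otimes> x" by (simp add: inv_mult_group)
  moreover have "inv (inv x \<otimes> y) \<in> derived G K"
    using xy unfolding derived_cong_def by blast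
  ultimately show ?thesis
    using xy unfolding derived_cong_def by auto
qed

lemma derived_cong_trans:
  assumes K: "subgroup K G" and xy: "derived_cong K x y" and yz: "derived_cong K y z"
  shows "derived_cong K x z"
proof -
  interpret D: subgroup "derived G K" G
    by (rule derived_is_subgroup[OF subgroup.subset[OF K]])
  have "x \<in> carrier G" "y \<in> carrier G" "z \<in> carrier G"
    using xy yz subgroup.subset[OF K] unfolding derived_cong_def by auto
  then have "(inv x \<otimes> y) \<otimes> (inv y \<otimes> z) = inv x \<otimes> z"
    by (simp add: m_assoc mult_inv_cancel_left)
  moreover have "(inv x \<otimes> y) \<otimes> (inv y \<otimes> z) \<in> derived G K"
    using xy yz unfolding derived_cong_def by blast
  ultimately show ?thesis
    using xy yz unfolding derived_cong_def by auto
qed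

lemma derived_cong_mult:
  assumes K: "subgroup K G" and xx': "derived_cong K x x'" and yy': "derived_cong K y y'"
  shows "derived_cong K (x \<otimes> y) (x' \<otimes> y')"
proof -
  interpret D: subgroup "derived G K" G
    by (rule derived_is_subgroup[OF subgroup.subset[OF K]])
  have in_K: "x \<in> K" "y \<in> K" "x' \<in> K" "y' \<in> K"
    using xx' yy' unfolding derived_cong_def by auto
  then have "x \<in> carrier G" "y \<in> carrier G" "x' \<in> carrier G" "y' \<in> carrier G"
    using subgroup.subset[OF K] by auto
  then have "(inv y \<otimes> (inv x \<otimes> x') \<otimes> y) \<otimes> (inv y \<otimes> y') = inv (x \<otimes> y) \<otimes> (x' \<otimes> y')"
    by (simp add: m_assoc inv_mult_group mult_inv_cancel_left)
  moreover have "inv y \<otimes> (inv x \<otimes> x') \<otimes> y \<in> derived G K"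
    using derived_conj_closed[OF K in_K(2)] xx' unfolding derived_cong_def by blast
  ultimately show ?thesis
    using yy' in_K subgroup.m_closed[OF K] D.m_closed unfolding derived_cong_def by metis
qed

lemma derived_cong_commute:
  assumes "subgroup K G" "x \<in> K" "y \<in> K"
  shows "derived_cong K (x \<otimes> y) (y \<otimes> x)"
  using assms by (simp add: derived_cong_def derived_commutator_mem subgroup.m_closed)

end

fun power_product :: "('a, 'b) monoid_scheme \<Rightarrow> 'a list \<Rightarrow> nat list \<Rightarrow> 'a" where
  "power_product G (a # as) (n # ns) = a [^]\<^bsub>G\<^esub> n \<otimes>\<^bsub>G\<^esub> power_product G as ns"
| "power_product G _ _ = \<one>\<^bsub>G\<^esub>"

lemma (in group) power_product_closed:
  assumes "subgroup K G" "set as \<subseteq> K"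
  shows "power_product G as ns \<in> K"
  using assms(2)
proof (induction as arbitrary: ns)
  case (Cons a as)
  then show ?case
    by (cases ns) (auto simp: subgroup.one_closed subgroup.m_closed subgroup_nat_pow_closed assms(1))
qed (simp add: subgroup.one_closed assms(1))

lemma (in group) derived_cong_power_product_bump:
  assumes K: "subgroup K G" and as: "set as \<subseteq> K"
    and "length ns = length as" and "j < length as"
  shows "derived_cong K (as ! j \<otimes> power_product G as ns) (power_product G as (bump j ns))"
  using assms(2-)
proof (induction as arbitrary: ns j)
  case (Cons a as)
  then obtain n ns' where ns: "ns = n # ns'" by (cases ns) auto
  have a: "a \<in> K" "a \<in> carrier G" and as: "set as \<subseteq> K"
    using Cons.prems subgroup.subset[OF K] by auto
  have P: "power_product G as ns' \<in> K" "power_product G as ns' \<in> carrier G"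
    using power_product_closed[OF K as] subgroup.subset[OF K] by auto
  show ?case
  proof (cases j)
    case 0
    have "a \<otimes> a [^] n = a [^] n \<otimes> a"
      using nat_pow_Suc2[OF a(2)] by simp
    then have "a \<otimes> power_product G (a # as) ns = power_product G (a # as) (bump j ns)"
      using a P by (simp add: ns 0 m_assoc[symmetric])
    then show ?thesis
      using derived_cong_refl[OF K power_product_closed[OF K]] Cons.prems 0 by simp
  next
    case (Suc j')
    have an: "a [^] n \<in> K" "a [^] n \<in> carrier G"
      using a subgroup_nat_pow_closed[OF K] by auto
    have aj: "as ! j' \<in> K" "as ! j' \<in> carrier G"
      using Cons.prems Suc as nth_mem subgroup.subset[OF K] by auto
    have IH: "derived_cong K (as ! j' \<otimes> power_product G as ns') (power_product G as (bump j' ns'))"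
      using Cons.IH[OF as] Cons.prems Suc ns by auto
    have "derived_cong K ((as ! j' \<otimes> a [^] n) \<otimes> power_product G as ns')
                         ((a [^] n \<otimes> as ! j') \<otimes> power_product G as ns')"
      using derived_cong_mult[OF K derived_cong_commute[OF K aj(1) an(1)] derived_cong_refl[OF K P(1)]] .
    moreover have "derived_cong K (a [^] n \<otimes> (as ! j' \<otimes> power_product G as ns'))
                                  (a [^] n \<otimes> power_product G as (bump j' ns'))"
      using derived_cong_mult[OF K derived_cong_refl[OF K an(1)] IH] .
    ultimately show ?thesis
      using derived_cong_trans[OF K] aj an P by (simp add: ns Suc m_assoc)
  qed
qed simp

section \<open>Uniformly bounded Folner multisets\<close>

definition folner_mset :: "('a, 'b) monoid_scheme \<Rightarrow> 'a set \<Rightarrow> real \<Rightarrow> 'a multiset \<Rightarrow> bool" where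
  "folner_mset G A \<delta> M \<longleftrightarrow>
     M \<noteq> {#} \<and> (\<forall>a\<in>A. real (size (image_mset (\<lambda>x. a \<otimes>\<^bsub>G\<^esub> x) M - M)) \<le> \<delta> * real (size M))"

lemma folner_mset_mono: "folner_mset G A \<delta> M \<Longrightarrow> \<delta> \<le> \<delta>' \<Longrightarrow> folner_mset G A \<delta>' M"
  unfolding folner_mset_def by (meson mult_right_mono of_nat_0_le_iff order_trans)

definition box_mset :: "('a, 'b) monoid_scheme \<Rightarrow> 'a list \<Rightarrow> nat \<Rightarrow> 'a multiset \<Rightarrow> 'a multiset" where
  "box_mset G as L M = (\<Sum>ns\<in>box L (length as). image_mset (\<lambda>x. power_product G as ns \<otimes>\<^bsub>G\<^esub> x) M)"

definition box_corrections :: "('a, 'b) monoid_scheme \<Rightarrow> 'a list \<Rightarrow> nat \<Rightarrow> 'a set" where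
  "box_corrections G as L =
     (\<lambda>(j, ns). inv\<^bsub>G\<^esub> (power_product G as (bump j ns)) \<otimes>\<^bsub>G\<^esub> (as ! j \<otimes>\<^bsub>G\<^esub> power_product G as ns))
       ` ({..<length as} \<times> box L (length as))"

lemma size_box_mset: "size (box_mset G as L M) = L ^ length as * size M"
  by (simp add: box_mset_def card_box)

lemma finite_box_corrections: "finite (box_corrections G as L)"
  by (simp add: box_corrections_def finite_box)

lemma card_box_corrections_le: "card (box_corrections G as L) \<le> length as * L ^ length as"
proof -
  have "card (box_corrections G as L) \<le> card ({..<length as} \<times> box L (length as))"
    unfolding box_corrections_def by (rule card_image_le) (simp add: finite_box)
  then show ?thesis by (simp add: card_cartesian_product card_box)
qed

lemma (in group) box_corrections_subset_derived:
  assumes K: "subgroup K G" and as: "set as \<subseteq> K"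
  shows "box_corrections G as L \<subseteq> derived G K"
proof -
  have "inv (power_product G as (bump j ns)) \<otimes> (as ! j \<otimes> power_product G as ns) \<in> derived G K"
    if "j < length as" "ns \<in> box L (length as)" for j ns
  proof -
    have "derived_cong K (power_product G as (bump j ns)) (as ! j \<otimes> power_product G as ns)"
      using derived_cong_sym[OF K derived_cong_power_product_bump[OF K as]] that
      by (simp add: box_def)
    then show ?thesis unfolding derived_cong_def by blast
  qed
  then show ?thesis unfolding box_corrections_def by auto
qed

lemma (in group) set_mset_box_mset_subset:
  assumes K: "subgroup K G" and "set as \<subseteq> K" "set_mset M \<subseteq> K"
  shows "set_mset (box_mset G as L M) \<subseteq> K"
  using assms power_product_closed[OF K] subgroup.m_closed[OF K]
  by (auto simp: box_mset_def set_mset_sum finite_box)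

lemma size_sum_bump_box_diff_le:
  fixes F :: "nat list \<Rightarrow> 'x multiset"
  assumes "j < k" and size_F: "\<And>ns. size (F ns) = m"
  shows "real L * real (size ((\<Sum>ns\<in>bump j ` box L k. F ns) - (\<Sum>ns\<in>box L k. F ns)))
    \<le> real (card (box L k)) * real m"
proof -
  have "size ((\<Sum>ns\<in>bump j ` box L k. F ns) - (\<Sum>ns\<in>box L k. F ns))
      \<le> (\<Sum>ns\<in>bump j ` box L k - box L k. size (F ns))"
    by (rule size_sum_diff_sum_le_diff) (simp_all add: finite_box)
  also have "\<dots> = card (bump j ` box L k - box L k) * m"
    using size_F by simp
  finally have "L * size ((\<Sum>ns\<in>bump j ` box L k. F ns) - (\<Sum>ns\<in>box L k. F ns))
      \<le> L * card (bump j ` box L k - box L k) * m"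
    by simp
  also have "\<dots> \<le> card (box L k) * m"
    using card_bump_box_diff[OF assms(1)] by simp
  finally show ?thesis
    by (metis of_nat_le_iff of_nat_mult)
qed

text \<open>Translation by the j-th base moves the slab of ns onto that of its bump, up to the
  correction c: the Folner property of M controls c, and the box loses only its top slice.\<close>
lemma (in group) folner_mset_box_mset:
  assumes L: "L > 0" and as: "set as \<subseteq> carrier G" and M: "set_mset M \<subseteq> carrier G"
    and folner: "folner_mset G (box_corrections G as L) \<delta> M"
  shows "folner_mset G (set as) (\<delta> + 1 / real L) (box_mset G as L M)"
proof -
  let ?k = "length as" and ?P = "power_product G as"
  let ?B = "box L ?k" and ?tr = "\<lambda>g. image_mset (\<lambda>x. g \<otimes> x)"
  have P: "?P ns \<in> carrier G" for ns
    using power_product_closed[OF subgroup_self as] .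
  have "real (size (?tr b (box_mset G as L M) - box_mset G as L M))
      \<le> (\<delta> + 1 / real L) * real (size (box_mset G as L M))" if "b \<in> set as" for b
  proof -
    obtain j where j: "j < ?k" and b: "b = as ! j"
      using \<open>b \<in> set as\<close> by (auto simp: in_set_conv_nth)
    define c where "c ns = inv (?P (bump j ns)) \<otimes> (b \<otimes> ?P ns)" for ns
    define Z where "Z = (\<Sum>ns\<in>?B. ?tr (?P (bump j ns)) M)"
    have bc: "b \<in> carrier G" using j b as nth_mem by blast
    have "?tr b (box_mset G as L M) = (\<Sum>ns\<in>?B. ?tr (?P (bump j ns)) (?tr (c ns) M))"
      unfolding box_mset_def image_mset_sum multiset.map_comp
      using M bc P by (intro sum.cong image_mset_cong) (auto simp: c_def m_assoc mult_inv_cancel_left)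
    then have "size (?tr b (box_mset G as L M) - Z)
        \<le> (\<Sum>ns\<in>?B. size (?tr (?P (bump j ns)) (?tr (c ns) M) - ?tr (?P (bump j ns)) M))"
      unfolding Z_def by (simp add: size_sum_diff_sum_le finite_box)
    also have "\<dots> \<le> (\<Sum>ns\<in>?B. size (?tr (c ns) M - M))"
      by (intro sum_mono size_image_mset_diff_le)
    also have "real \<dots> \<le> (\<Sum>ns\<in>?B. \<delta> * real (size M))"
      unfolding of_nat_sum
    proof (rule sum_mono)
      fix ns assume "ns \<in> ?B"
      then have "c ns \<in> box_corrections G as L"
        unfolding box_corrections_def c_def b using j by force
      then show "real (size (?tr (c ns) M - M)) \<le> \<delta> * real (size M)"
        using folner unfolding folner_mset_def by blast
    qed
    finally have near: "real (size (?tr b (box_mset G as L M) - Z)) \<le> \<delta> * real (size (box_mset G as L M))"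
      by (simp add: size_box_mset card_box algebra_simps)
    have Z: "Z = (\<Sum>ns\<in>bump j ` ?B. ?tr (?P ns) M)"
      unfolding Z_def by (simp add: sum.reindex inj_on_subset[OF inj_bump])
    have "real L * real (size (Z - box_mset G as L M)) \<le> real (card ?B) * real (size M)"
      unfolding box_mset_def Z by (rule size_sum_bump_box_diff_le[OF j]) simp
    then have far: "real (size (Z - box_mset G as L M)) \<le> 1 / real L * real (size (box_mset G as L M))"
      using L by (simp add: size_box_mset card_box field_simps)
    show ?thesis
      using size_diff_triangle[of "?tr b (box_mset G as L M)" "box_mset G as L M" Z] near far
      by (simp add: distrib_right)
  qed
  moreover have "box_mset G as L M \<noteq> {#}"
    using folner L by (auto simp: folner_mset_def size_box_mset simp flip: size_eq_0_iff_empty)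
  ultimately show ?thesis
    unfolding folner_mset_def by blast
qed

lemma uniform_folner_msets:
  fixes l k :: nat and \<delta> :: real
  assumes "\<delta> > 0"
  shows "\<exists>N. \<forall>(G :: ('a, 'b) monoid_scheme) K A.
           group G \<longrightarrow> subgroup K G \<longrightarrow> (derived G ^^ l) K = {\<one>\<^bsub>G\<^esub>} \<longrightarrow>
           A \<subseteq> K \<longrightarrow> finite A \<longrightarrow> card A \<le> k \<longrightarrow>
           (\<exists>M. folner_mset G A \<delta> M \<and> set_mset M \<subseteq> K \<and> size M \<le> N)"
  using assms
proof (induction l arbitrary: \<delta> k)
  case 0
  show ?case
  proof (intro exI[of _ 1] allI impI)
    fix G :: "('a, 'b) monoid_scheme" and K A
    assume "group G" "(derived G ^^ 0) K = {\<one>\<^bsub>G\<^esub>}" "A \<subseteq> K"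
    then have K: "K = {\<one>\<^bsub>G\<^esub>}" and A: "A \<subseteq> {\<one>\<^bsub>G\<^esub>}"
      by auto
    have "\<one>\<^bsub>G\<^esub> \<otimes>\<^bsub>G\<^esub> \<one>\<^bsub>G\<^esub> = \<one>\<^bsub>G\<^esub>"
      using \<open>group G\<close> by (simp add: group.is_monoid)
    then have "folner_mset G A \<delta> {#\<one>\<^bsub>G\<^esub>#}"
      using A \<open>\<delta> > 0\<close> by (auto simp: folner_mset_def)
    then show "\<exists>M. folner_mset G A \<delta> M \<and> set_mset M \<subseteq> K \<and> size M \<le> 1"
      using K by auto
  qed
next
  case (Suc l)
  obtain L :: nat where L: "L > 0" "inverse (real L) < \<delta> / 2"
    using ex_inverse_of_nat_less[of "\<delta> / 2"] Suc.prems by auto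
  obtain N where N: "\<forall>(G :: ('a, 'b) monoid_scheme) K A.
           group G \<longrightarrow> subgroup K G \<longrightarrow> (derived G ^^ l) K = {\<one>\<^bsub>G\<^esub>} \<longrightarrow>
           A \<subseteq> K \<longrightarrow> finite A \<longrightarrow> card A \<le> k * L ^ k \<longrightarrow>
           (\<exists>M. folner_mset G A (\<delta> / 2) M \<and> set_mset M \<subseteq> K \<and> size M \<le> N)"
    using Suc.IH[of "\<delta> / 2" "k * L ^ k"] Suc.prems by auto
  show ?case
  proof (intro exI[of _ "L ^ k * N"] allI impI)
    fix G :: "('a, 'b) monoid_scheme" and K A
    assume G: "group G" and K: "subgroup K G" and dl: "(derived G ^^ Suc l) K = {\<one>\<^bsub>G\<^esub>}"
      and A: "A \<subseteq> K" "finite A" "card A \<le> k"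
    interpret group G by (rule G)
    obtain as where as: "set as = A" "length as \<le> k"
      using A by (metis distinct_card finite_distinct_list)
    have as_K: "set as \<subseteq> K" and as_G: "set as \<subseteq> carrier G"
      using as(1) A(1) subgroup.subset[OF K] by auto
    have D: "subgroup (derived G K) G"
      by (rule derived_is_subgroup[OF subgroup.subset[OF K]])
    have dl_D: "(derived G ^^ l) (derived G K) = {\<one>\<^bsub>G\<^esub>}"
      using dl by (simp only: funpow_Suc_right comp_apply)
    have "length as * L ^ length as \<le> k * L ^ k"
      using as(2) L(1) by (intro mult_le_mono power_increasing) auto
    then have card: "card (box_corrections G as L) \<le> k * L ^ k"
      using card_box_corrections_le[of G as L] by linarith
    obtain M where M: "folner_mset G (box_corrections G as L) (\<delta> / 2) M"
        "set_mset M \<subseteq> derived G K" "size M \<le> N"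
      using N[rule_format, OF G D dl_D box_corrections_subset_derived[OF K as_K]
          finite_box_corrections card] by blast
    have M_K: "set_mset M \<subseteq> K"
      using M(2) derived_incl[OF subset_refl K] by blast
    have "folner_mset G (set as) (\<delta> / 2 + 1 / real L) (box_mset G as L M)"
      using folner_mset_box_mset[OF L(1) as_G _ M(1)] M_K subgroup.subset[OF K] by blast
    moreover have "\<delta> / 2 + 1 / real L \<le> \<delta>"
      using L by (simp add: field_simps)
    ultimately have "folner_mset G A \<delta> (box_mset G as L M)"
      using folner_mset_mono as(1) by blast
    moreover have "size (box_mset G as L M) \<le> L ^ k * N"
      using M(3) as(2) L(1) by (simp add: size_box_mset mult_le_mono power_increasing)
    ultimately show "\<exists>M. folner_mset G A \<delta> M \<and> set_mset M \<subseteq> K \<and> size M \<le> L ^ k * N"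
      using set_mset_box_mset_subset[OF K as_K M_K] by blast
  qed
qed

corollary uniform_folner_msets_family:
  fixes G :: "'i \<Rightarrow> ('a, 'b) monoid_scheme"
  assumes "\<And>i. group (G i)" "\<And>i. (derived (G i) ^^ l) (carrier (G i)) = {\<one>\<^bsub>G i\<^esub>}"
    and "\<And>i. A i \<subseteq> carrier (G i)" "\<And>i. finite (A i)" "\<And>i. card (A i) \<le> k"
    and "\<delta> > 0"
  shows "\<exists>N. \<forall>i. \<exists>M. folner_mset (G i) (A i) \<delta> M \<and> set_mset M \<subseteq> carrier (G i) \<and> size M \<le> N"
proof -
  obtain N where N: "\<forall>(H :: ('a, 'b) monoid_scheme) K B.
      group H \<longrightarrow> subgroup K H \<longrightarrow> (derived H ^^ l) K = {\<one>\<^bsub>H\<^esub>} \<longrightarrow>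
      B \<subseteq> K \<longrightarrow> finite B \<longrightarrow> card B \<le> k \<longrightarrow>
      (\<exists>M. folner_mset H B \<delta> M \<and> set_mset M \<subseteq> K \<and> size M \<le> N)"
    using uniform_folner_msets[OF assms(6)] by blast
  show ?thesis
  proof (intro exI[of _ N] allI)
    fix i
    show "\<exists>M. folner_mset (G i) (A i) \<delta> M \<and> set_mset M \<subseteq> carrier (G i) \<and> size M \<le> N"
      using N[rule_format, OF assms(1) group.subgroup_self[OF assms(1)] assms(2-5)] .
  qed
qed

section \<open>Isoperimetry of Schreier graphs\<close>

lemma (in group_action) card_vertex_boundary_le:
  assumes S: "S \<subseteq> carrier G" "\<And>s. s \<in> S \<Longrightarrow> inv s \<in> S" "finite S"
    and X: "finite X"
  shows "card (vertex_boundary E \<phi> S X) \<le> (\<Sum>s\<in>S. card (\<phi> s ` X - X))"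
proof -
  have "vertex_boundary E \<phi> S X \<subseteq> (\<Union>s\<in>S. \<phi> s ` X - X)"
  proof
    fix y assume "y \<in> vertex_boundary E \<phi> S X"
    then obtain x s where y: "y \<in> E" "y \<notin> X" and x: "x \<in> X" and s: "s \<in> S"
      and xy: "y = \<phi> s x \<or> x = \<phi> s y"
      unfolding vertex_boundary_def schreier_adj_def by blast
    have "y = \<phi> s x \<or> y = \<phi> (inv s) x"
      using xy orbit_sym_aux[of s y x] y(1) S(1) s by auto
    then show "y \<in> (\<Union>s\<in>S. \<phi> s ` X - X)"
      using S(2) s x y(2) by blast
  qed
  then have "card (vertex_boundary E \<phi> S X) \<le> card (\<Union>s\<in>S. \<phi> s ` X - X)"
    by (intro card_mono) (use S(3) X in auto)
  also have "\<dots> \<le> (\<Sum>s\<in>S. card (\<phi> s ` X - X))"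
    by (rule card_UN_le[OF S(3)])
  finally show ?thesis .
qed

lemma (in group_action) sum_card_orbit_level_diff_le:
  assumes M: "set_mset M \<subseteq> carrier G" and x: "x \<in> E" and s: "s \<in> carrier G"
  defines "P \<equiv> image_mset (\<lambda>g. \<phi> g x) M"
  shows "(\<Sum>t<size M. card (\<phi> s ` mset_level P t - mset_level P t))
    \<le> size (image_mset (\<lambda>g. s \<otimes> g) M - M)"
proof -
  have P_E: "set_mset P \<subseteq> E"
    using M x element_image by (auto simp: P_def)
  have translate: "image_mset (\<phi> s) P = image_mset (\<lambda>g. \<phi> g x) (image_mset (\<lambda>g. s \<otimes> g) M)"
    unfolding P_def multiset.map_comp using M x s composition_rule
    by (intro image_mset_cong) auto
  have "(\<Sum>t<size M. card (\<phi> s ` mset_level P t - mset_level P t)) = size (image_mset (\<phi> s) P - P)"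
    using size_diff_eq_sum_mset_level[of "image_mset (\<phi> s) P" "size M" P]
      mset_level_image_mset[OF inj_on_subset[OF inj_prop[OF s] P_E]]
    by (simp add: P_def)
  also have "\<dots> \<le> size (image_mset (\<lambda>g. s \<otimes> g) M - M)"
    unfolding translate unfolding P_def by (rule size_image_mset_diff_le)
  finally show ?thesis .
qed

lemma le_card_vertex_boundary_of_h_ver:
  assumes h: "ereal \<epsilon> \<le> h_ver \<Omega> \<phi> S" and X: "X \<subseteq> \<Omega>" "2 * card X \<le> card \<Omega>"
  shows "\<epsilon> * card X \<le> card (vertex_boundary \<Omega> \<phi> S X)"
proof (cases "card X = 0")
  case False
  then have "X \<in> {X. X \<subseteq> \<Omega> \<and> X \<noteq> {} \<and> real (card X) \<le> real (card \<Omega>) / 2}"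
    using X by auto
  then have "ereal \<epsilon> \<le> ereal (real (card (vertex_boundary \<Omega> \<phi> S X)) / real (card X))"
    using h unfolding h_ver_def by (meson INF_lower order_trans)
  then show ?thesis
    using False by (simp add: pos_le_divide_eq mult.commute)
qed simp

text \<open>The level sets of the orbit image of a Folner multiset are almost invariant on
  average, so one of them has a small boundary.\<close>
lemma (in group_action) h_ver_le_of_folner_mset:
  assumes E: "finite E" and S: "S \<subseteq> carrier G" "\<And>s. s \<in> S \<Longrightarrow> inv s \<in> S" "finite S"
    and M: "folner_mset G S \<delta> M" "set_mset M \<subseteq> carrier G" "2 * size M \<le> card E"
  shows "h_ver E \<phi> S \<le> ereal (real (card S) * \<delta>)"
proof (rule ccontr)
  assume "\<not> ?thesis"
  then obtain \<epsilon> where \<epsilon>: "real (card S) * \<delta> < \<epsilon>" "ereal \<epsilon> \<le> h_ver E \<phi> S"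
    by (meson ereal_dense2 less_imp_le not_le ereal_less_eq(3) order.strict_trans1)
  have "size M > 0"
    using M(1) by (simp add: folner_mset_def nonempty_has_size)
  then obtain x where x: "x \<in> E"
    using M(3) by fastforce
  define P where "P = image_mset (\<lambda>g. \<phi> g x) M"
  have level_E: "mset_level P t \<subseteq> E" for t
    using mset_level_subset M(2) x element_image by (fastforce simp: P_def)
  have level_small: "2 * card (mset_level P t) \<le> card E" for t
    using card_mono[OF _ mset_level_subset, of P t] card_set_mset_le[of P] M(3)
    by (simp add: P_def)
  have "\<epsilon> * size M = (\<Sum>t<size M. \<epsilon> * card (mset_level P t))"
    using sum_card_mset_level[of P "size M"]
    by (simp add: P_def flip: sum_distrib_left of_nat_sum)
  also have "\<dots> \<le> (\<Sum>t<size M. real (card (vertex_boundary E \<phi> S (mset_level P t))))"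
    by (intro sum_mono le_card_vertex_boundary_of_h_ver[OF \<epsilon>(2) level_E level_small])
  also have "\<dots> \<le> (\<Sum>t<size M. \<Sum>s\<in>S. real (card (\<phi> s ` mset_level P t - mset_level P t)))"
    using card_vertex_boundary_le[OF S finite_subset[OF level_E E]]
    by (intro sum_mono) (simp flip: of_nat_sum)
  also have "\<dots> = (\<Sum>s\<in>S. real (\<Sum>t<size M. card (\<phi> s ` mset_level P t - mset_level P t)))"
    by (subst sum.swap) simp
  also have "\<dots> \<le> (\<Sum>s\<in>S. \<delta> * size M)"
  proof (rule sum_mono)
    fix s assume "s \<in> S"
    then show "real (\<Sum>t<size M. card (\<phi> s ` mset_level P t - mset_level P t)) \<le> \<delta> * size M"
      using sum_card_orbit_level_diff_le[OF M(2) x, of s] S(1) M(1)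
      unfolding P_def folner_mset_def by (meson of_nat_le_iff order_trans subsetD)
  qed
  also have "\<dots> = real (card S) * \<delta> * size M"
    by simp
  finally show False
    using \<epsilon>(1) \<open>size M > 0\<close> by simp
qed

theorem mainTheorem2:
  fixes G :: "nat \<Rightarrow> ('a, 'b) monoid_scheme"
    and \<Omega> :: "nat \<Rightarrow> 'c set"
    and \<phi> :: "nat \<Rightarrow> 'a \<Rightarrow> 'c \<Rightarrow> 'c"
    and l :: nat
  assumes grp: "\<And>n. group (G n)"
    and fin: "\<And>n. finite (carrier (G n))"
    and solv: "\<And>n. solvable (G n)"
    and dl: "\<And>n. ((derived (G n)) ^^ l) (carrier (G n)) = {\<one>\<^bsub>G n\<^esub>}"
    and act: "\<And>n. transitive_action (G n) (\<Omega> n) (\<phi> n)"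
    and finO: "\<And>n. finite (\<Omega> n)"
    and lim: "filterlim (\<lambda>n. card (\<Omega> n)) at_top sequentially"
  shows "\<forall>(d::nat) (S :: nat \<Rightarrow> 'a set).
           (\<forall>n. S n \<subseteq> carrier (G n) \<and> (\<forall>s\<in>S n. inv\<^bsub>G n\<^esub> s \<in> S n) \<and> card (S n) \<le> d)
           \<longrightarrow> \<not> schreier_expanders \<Omega> \<phi> S"
proof (intro allI impI notI)
  fix d :: nat and S :: "nat \<Rightarrow> 'a set"
  assume S: "\<forall>n. S n \<subseteq> carrier (G n) \<and> (\<forall>s\<in>S n. inv\<^bsub>G n\<^esub> s \<in> S n) \<and> card (S n) \<le> d"
    and "schreier_expanders \<Omega> \<phi> S"
  then obtain \<epsilon> where \<epsilon>: "\<epsilon> > 0" "\<And>n. ereal \<epsilon> \<le> h_ver (\<Omega> n) (\<phi> n) (S n)"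
    unfolding schreier_expanders_def by blast
  define \<delta> where "\<delta> = \<epsilon> / (real d + 1)"
  have \<delta>: "\<delta> > 0" "real d * \<delta> < \<epsilon>"
    using \<epsilon>(1) by (simp_all add: \<delta>_def field_simps)
  have S_n: "\<And>n. S n \<subseteq> carrier (G n)" "\<And>n. finite (S n)" "\<And>n. card (S n) \<le> d"
    using S finite_subset[OF _ fin] by blast+
  obtain N where N: "\<forall>n. \<exists>M. folner_mset (G n) (S n) \<delta> M \<and> set_mset M \<subseteq> carrier (G n) \<and> size M \<le> N"
    using uniform_folner_msets_family[of G l S d \<delta>, OF grp dl S_n \<delta>(1)] by blast
  obtain n where n: "2 * N \<le> card (\<Omega> n)"
    using lim unfolding filterlim_at_top eventually_sequentially by blast
  obtain M where M: "folner_mset (G n) (S n) \<delta> M" "set_mset M \<subseteq> carrier (G n)" "size M \<le> N"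
    using N by blast
  interpret group_action "G n" "\<Omega> n" "\<phi> n"
    using act[of n] by (simp add: transitive_action_def)
  have "h_ver (\<Omega> n) (\<phi> n) (S n) \<le> ereal (real (card (S n)) * \<delta>)"
    by (rule h_ver_le_of_folner_mset[OF finO S_n(1) _ S_n(2) M(1,2)]) (use S M(3) n in auto)
  also have "\<dots> \<le> ereal (real d * \<delta>)"
    using S_n(3) \<delta>(1) by (simp add: mult_right_mono)
  also have "\<dots> < ereal \<epsilon>"
    using \<delta>(2) by simp
  finally show False
    using \<epsilon>(2)[of n] by simp
qed

end
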